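(* Let $X$ be a Banach space and let $T\in\mathrm{Lip}_0(X)$ be Gâteaux differentiable at every point of $X$. Then $$\omega(T)=\sup\{\omega(D_T(x)): x\in X\}.$$
   Context: $\mathrm{Lip}_0(X)$ is the set of Lipschitz maps $T:X\to X$ with $T(0)=0$. $T$ is Gâteaux differentiable at $x_0$ if there is a bounded linear operator $D_T(x_0):X\to X$ with $D_T(x_0)(u)=\lim_{t\to0}(T(x_0+tu)-T(x_0))/t$ for every $u\in X$. $D(x)=\{x^*\in X^*: x^*(x)=\|x^*\|\|x\|=\|x\|^2\}$. For $T\in\mathrm{Lip}_0(X)$, $\omega(T)=\sup\{|f(Tx-Ty)|/\|x-y\|^2: x\neq y,\ f\in D(x-y)\}$; for a bounded linear operator $S$ this equals $\sup\{|x^*(Sx)|: x\in S_X,\ x^*\in D(x)\}$. *)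

theory Defs
  imports "HOL-Analysis.Analysis"
begin

definition Lip0 :: "('a::real_normed_vector \<Rightarrow> 'a) set" where
  "Lip0 = {T. (\<exists>C. C-lipschitz_on UNIV T) \<and> T 0 = 0}"

definition duality_set :: "'a::real_normed_vector \<Rightarrow> ('a \<Rightarrow> real) set" where
  "duality_set x = {f. bounded_linear f \<and> f x = onorm f * norm x \<and> onorm f * norm x = (norm x)\<^sup>2}"

definition omega :: "('a::real_normed_vector \<Rightarrow> 'a) \<Rightarrow> real" where
  "omega T = Sup {\<bar>f (T x - T y)\<bar> / (norm (x - y))\<^sup>2 | x y f. x \<noteq> y \<and> f \<in> duality_set (x - y)}"

definition has_gateaux_derivative :: "('a::real_normed_vector \<Rightarrow> 'b::real_normed_vector) \<Rightarrow> ('a \<Rightarrow> 'b) \<Rightarrow> 'a \<Rightarrow> bool" where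
  "has_gateaux_derivative T D x0 \<longleftrightarrow> bounded_linear D \<and>
     (\<forall>u. ((\<lambda>t. (T (x0 + t *\<^sub>R u) - T x0) /\<^sub>R t) \<longlongrightarrow> D u) (at 0))"

definition gateaux_differentiable :: "('a::real_normed_vector \<Rightarrow> 'b::real_normed_vector) \<Rightarrow> 'a \<Rightarrow> bool" where
  "gateaux_differentiable T x0 \<longleftrightarrow> (\<exists>D. has_gateaux_derivative T D x0)"

definition gateaux_derivative :: "('a::real_normed_vector \<Rightarrow> 'b::real_normed_vector) \<Rightarrow> 'a \<Rightarrow> ('a \<Rightarrow> 'b)" where
  "gateaux_derivative T x0 = (SOME D. has_gateaux_derivative T D x0)"

end

theory Submission
  imports Defs
begin

(*
  The numerical index omega(T) is the supremum of the "quotient set" of T, i.e. of the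
  numbers |f(Tx - Ty)| / |x - y|^2 with f in the duality set of x - y.  For a linear
  map D these quotients are simply |f(D h)| / |h|^2 with f in D(h).

  Inequality  sup_x omega(D_T(x)) <= omega(T):  a quotient of T along the ray p + t h
  (t > 0) is |f(T(p + t h) - T p)| / (t |h|^2), since the duality set scales with t.
  Letting t -> 0+ bounds |f(D_T(p) h)| by omega(T) |h|^2, so every quotient of
  D_T(p) is at most omega(T).

  Inequality  omega(T) <= sup_x omega(D_T(x)):  for x \<noteq> y and f in D(x - y), the real
  function t |-> f(T(y + t(x - y))) is differentiable with derivative
  f(D_T(y + t(x - y))(x - y)); the mean value theorem turns the quotient of T at
  (x, y) into a quotient of a single derivative D_T(p).

  If no nonzero vector has a nonempty duality set, all quotient sets are empty and both
  sides equal Sup {}; this degenerate case is treated separately.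
*)

definition omega_quotients :: "('a::real_normed_vector \<Rightarrow> 'a) \<Rightarrow> real set" where
  "omega_quotients T =
     {\<bar>f (T x - T y)\<bar> / (norm (x - y))\<^sup>2 | x y f. x \<noteq> y \<and> f \<in> duality_set (x - y)}"

lemma omega_eq_Sup_quotients: "omega T = Sup (omega_quotients T)"
  unfolding omega_def omega_quotients_def by simp

lemma omega_quotients_empty_iff:
  fixes T :: "'a::real_normed_vector \<Rightarrow> 'a"
  shows "omega_quotients T = {} \<longleftrightarrow> (\<forall>h::'a. h \<noteq> 0 \<longrightarrow> duality_set h = {})"
proof
  assume empty: "omega_quotients T = {}"
  show "\<forall>h::'a. h \<noteq> 0 \<longrightarrow> duality_set h = {}"
  proof (intro allI impI)
    fix h :: 'a assume "h \<noteq> 0"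
    then have "\<bar>f (T h - T 0)\<bar> / (norm (h - 0))\<^sup>2 \<in> omega_quotients T"
      if "f \<in> duality_set h" for f
      using that unfolding omega_quotients_def by force
    with empty show "duality_set h = {}" by blast
  qed
next
  assume "\<forall>h::'a. h \<noteq> 0 \<longrightarrow> duality_set h = {}"
  then show "omega_quotients T = {}"
    unfolding omega_quotients_def by (auto simp: right_minus_eq)
qed

lemma omega_quotients_linear:
  assumes "linear D"
  shows "omega_quotients D = {\<bar>f (D h)\<bar> / (norm h)\<^sup>2 | h f. h \<noteq> 0 \<and> f \<in> duality_set h}"
proof -
  have diff: "D x - D y = D (x - y)" for x y
    using assms by (simp add: linear_diff)
  show ?thesis
    unfolding omega_quotients_def
  proof (intro set_eqI iffI)
    fix z assume "z \<in> {\<bar>f (D x - D y)\<bar> / (norm (x - y))\<^sup>2 | x y f. x \<noteq> y \<and> f \<in> duality_set (x - y)}"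
    then obtain x y f where "z = \<bar>f (D (x - y))\<bar> / (norm (x - y))\<^sup>2" "x - y \<noteq> 0" "f \<in> duality_set (x - y)"
      unfolding diff by auto
    then show "z \<in> {\<bar>f (D h)\<bar> / (norm h)\<^sup>2 | h f. h \<noteq> 0 \<and> f \<in> duality_set h}"
      by blast
  next
    fix z assume "z \<in> {\<bar>f (D h)\<bar> / (norm h)\<^sup>2 | h f. h \<noteq> 0 \<and> f \<in> duality_set h}"
    then obtain h f where "z = \<bar>f (D h - D 0)\<bar> / (norm (h - 0))\<^sup>2" "h \<noteq> 0" "f \<in> duality_set (h - 0)"
      using diff[of h 0] by auto
    then show "z \<in> {\<bar>f (D x - D y)\<bar> / (norm (x - y))\<^sup>2 | x y f. x \<noteq> y \<and> f \<in> duality_set (x - y)}"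
      by blast
  qed
qed

lemma duality_set_onorm:
  assumes "f \<in> duality_set h" "h \<noteq> 0"
  shows "onorm f = norm h"
proof -
  have "onorm f * norm h = norm h * norm h"
    using assms(1) unfolding duality_set_def by (simp add: power2_eq_square)
  then show ?thesis using assms(2) by simp
qed

lemma duality_set_scale:
  assumes "f \<in> duality_set h" "t > 0"
  shows "(\<lambda>v. t * f v) \<in> duality_set (t *\<^sub>R h)"
proof -
  have bl: "bounded_linear f" and eq: "f h = onorm f * norm h" "onorm f * norm h = (norm h)\<^sup>2"
    using assms(1) unfolding duality_set_def by auto
  have "onorm (\<lambda>v. t * f v) = t * onorm f"
    using onorm_scaleR[OF bl, of t] assms(2) by simp
  moreover have "f (t *\<^sub>R h) = t * f h"
    using bl by (simp add: linear_simps)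
  ultimately show ?thesis
    unfolding duality_set_def using bl eq assms(2)
    by (auto simp: bounded_linear_const_mult power2_eq_square algebra_simps)
qed

lemma omega_quotients_bdd_above:
  fixes T :: "'a::real_normed_vector \<Rightarrow> 'a"
  assumes "T \<in> Lip0"
  shows "bdd_above (omega_quotients T)"
proof -
  obtain L where L: "L-lipschitz_on UNIV T"
    using assms unfolding Lip0_def by auto
  have "z \<le> L" if z: "z \<in> omega_quotients T" for z
  proof -
    obtain x y f where z: "z = \<bar>f (T x - T y)\<bar> / (norm (x - y))\<^sup>2"
      and xy: "x \<noteq> y" and f: "f \<in> duality_set (x - y)"
      using z unfolding omega_quotients_def by blast
    have "bounded_linear f" using f unfolding duality_set_def by blast
    then have "\<bar>f (T x - T y)\<bar> \<le> onorm f * norm (T x - T y)"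
      using onorm by fastforce
    also have "\<dots> \<le> norm (x - y) * (L * norm (x - y))"
      using lipschitz_onD[OF L, of x y] duality_set_onorm[OF f] xy
      by (simp add: dist_norm mult_left_mono)
    finally show "z \<le> L"
      using xy unfolding z by (simp add: divide_le_eq power2_eq_square algebra_simps)
  qed
  then show ?thesis unfolding bdd_above_def by blast
qed

lemma quotient_le_omega:
  assumes "T \<in> Lip0" "x \<noteq> y" "f \<in> duality_set (x - y)"
  shows "\<bar>f (T x - T y)\<bar> \<le> omega T * (norm (x - y))\<^sup>2"
proof -
  have "\<bar>f (T x - T y)\<bar> / (norm (x - y))\<^sup>2 \<le> omega T"
    unfolding omega_eq_Sup_quotients
    using assms by (intro cSup_upper omega_quotients_bdd_above) (auto simp: omega_quotients_def)
  then show ?thesis using assms(2) by (simp add: divide_le_eq)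
qed

lemma has_gateaux_derivative_someI:
  assumes "\<forall>x. gateaux_differentiable T x"
  shows "has_gateaux_derivative T (gateaux_derivative T x) x"
  using assms unfolding gateaux_differentiable_def gateaux_derivative_def by (metis someI_ex)

lemma gateaux_derivative_functional:
  assumes "has_gateaux_derivative T D p" "bounded_linear f"
  shows "((\<lambda>t. f (T (p + t *\<^sub>R h) - T p) / t) \<longlongrightarrow> f (D h)) (at 0)"
proof -
  have "((\<lambda>t. (T (p + t *\<^sub>R h) - T p) /\<^sub>R t) \<longlongrightarrow> D h) (at 0)"
    using assms(1) unfolding has_gateaux_derivative_def by blast
  from bounded_linear.tendsto[OF assms(2) this]
  show ?thesis
    using linear_cmul[OF bounded_linear.linear[OF assms(2)]]
    by (simp add: divide_inverse mult.commute)
qed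

text \<open>
  First half of the argument: |f(D h)| <= omega(T) |h|^2 for a Gateaux derivative D,
  obtained as the limit of the quotients of T along the ray p + t h, t -> 0+.
\<close>
lemma gateaux_derivative_bound:
  assumes D: "has_gateaux_derivative T D p" and T: "T \<in> Lip0"
    and f: "f \<in> duality_set h" and h: "h \<noteq> 0"
  shows "\<bar>f (D h)\<bar> \<le> omega T * (norm h)\<^sup>2"
proof -
  let ?q = "\<lambda>t. f (T (p + t *\<^sub>R h) - T p) / t"
  have bl: "bounded_linear f" using f unfolding duality_set_def by blast
  have ray_bound: "\<bar>?q t\<bar> \<le> omega T * (norm h)\<^sup>2" if t: "t > 0" for t
  proof -
    have "\<bar>t * f (T (p + t *\<^sub>R h) - T p)\<bar> \<le> omega T * (norm (t *\<^sub>R h))\<^sup>2"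
      using quotient_le_omega[OF T, of "p + t *\<^sub>R h" p] duality_set_scale[OF f t] t h by simp
    then show ?thesis
      using t by (simp add: abs_mult power2_eq_square divide_le_eq algebra_simps)
  qed
  have "(?q \<longlongrightarrow> f (D h)) (at_right 0)"
    using tendsto_mono[OF at_le[of "{0<..}" UNIV] gateaux_derivative_functional[OF D bl]] by simp
  then have "((\<lambda>t. \<bar>?q t\<bar>) \<longlongrightarrow> \<bar>f (D h)\<bar>) (at_right 0)"
    by (rule tendsto_rabs)
  moreover have "eventually (\<lambda>t. \<bar>?q t\<bar> \<le> omega T * (norm h)\<^sup>2) (at_right (0::real))"
    using eventually_at_right_less[of 0] by (rule eventually_mono) (rule ray_bound)
  ultimately show ?thesis
    by (intro tendsto_le[OF trivial_limit_at_right_real tendsto_const])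
qed

lemma gateaux_derivative_quotients_le:
  assumes D: "has_gateaux_derivative T D p" and T: "T \<in> Lip0"
    and z: "z \<in> omega_quotients D"
  shows "z \<le> omega T"
proof -
  have "linear D" using D unfolding has_gateaux_derivative_def bounded_linear_def by blast
  then obtain h f where z: "z = \<bar>f (D h)\<bar> / (norm h)\<^sup>2" and h: "h \<noteq> 0" and f: "f \<in> duality_set h"
    using z omega_quotients_linear by blast
  show ?thesis
    using gateaux_derivative_bound[OF D T f h] h unfolding z by (simp add: divide_le_eq)
qed

lemma omega_gateaux_derivative_le:
  assumes "has_gateaux_derivative T D p" "T \<in> Lip0" "omega_quotients T \<noteq> {}"
  shows "omega D \<le> omega T"
  unfolding omega_eq_Sup_quotients[of D]
  using assms omega_quotients_empty_iff[of D] omega_quotients_empty_iff[of T]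
  by (intro cSup_least gateaux_derivative_quotients_le[OF assms(1,2)])
    (auto simp: omega_eq_Sup_quotients)

lemma gateaux_mean_value:
  fixes T :: "'a::real_normed_vector \<Rightarrow> 'b::real_normed_vector" and f :: "'b \<Rightarrow> real"
  assumes G: "\<forall>x. gateaux_differentiable T x" and f: "bounded_linear f"
  shows "\<exists>\<xi>>0. \<xi> < 1 \<and> f (T x - T y) = f (gateaux_derivative T (y + \<xi> *\<^sub>R (x - y)) (x - y))"
proof -
  define h where "h = x - y"
  define g where "g t = f (T (y + t *\<^sub>R h))" for t
  have lin: "linear f" using f bounded_linear.linear by blast
  have "DERIV g t :> f (gateaux_derivative T (y + t *\<^sub>R h) h)" for t
  proof -
    let ?p = "y + t *\<^sub>R h"
    have "(\<lambda>s. (g (t + s) - g t) / s) = (\<lambda>s. f (T (?p + s *\<^sub>R h) - T ?p) / s)"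
      unfolding g_def by (simp add: linear_diff[OF lin] scaleR_add_left add.assoc)
    then show ?thesis
      unfolding DERIV_def
      using gateaux_derivative_functional[OF has_gateaux_derivative_someI[OF G] f] by simp
  qed
  then obtain \<xi> where "0 < \<xi>" "\<xi> < 1" "g 1 - g 0 = (1 - 0) * f (gateaux_derivative T (y + \<xi> *\<^sub>R h) h)"
    using MVT2[of 0 1 g "\<lambda>t. f (gateaux_derivative T (y + t *\<^sub>R h) h)"] by auto
  moreover have "g 1 - g 0 = f (T x - T y)"
    unfolding g_def h_def by (simp add: linear_diff[OF lin])
  ultimately show ?thesis unfolding h_def by auto
qed

text \<open>
  Second half of the argument: every quotient of T is a quotient of some Gateaux
  derivative D_T(p), hence bounded by omega(D_T(p)).
\<close>
lemma quotient_le_derivative_omega: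
  assumes T: "T \<in> Lip0" and G: "\<forall>x. gateaux_differentiable T x"
    and z: "z \<in> omega_quotients T"
  shows "\<exists>p. z \<le> omega (gateaux_derivative T p)"
proof -
  obtain x y f where z: "z = \<bar>f (T x - T y)\<bar> / (norm (x - y))\<^sup>2"
    and xy: "x \<noteq> y" and f: "f \<in> duality_set (x - y)"
    using z unfolding omega_quotients_def by blast
  have "bounded_linear f" using f unfolding duality_set_def by blast
  then obtain p where eq: "f (T x - T y) = f (gateaux_derivative T p (x - y))"
    using gateaux_mean_value[OF G] by blast
  let ?D = "gateaux_derivative T p"
  have D: "has_gateaux_derivative T ?D p" using has_gateaux_derivative_someI[OF G] .
  then have "linear ?D" unfolding has_gateaux_derivative_def bounded_linear_def by blast
  then have "z \<in> omega_quotients ?D"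
    unfolding z eq omega_quotients_linear[OF \<open>linear ?D\<close>] using xy f by fastforce
  moreover have "bdd_above (omega_quotients ?D)"
    using gateaux_derivative_quotients_le[OF D T] unfolding bdd_above_def by blast
  ultimately show ?thesis
    unfolding omega_eq_Sup_quotients by (blast intro: cSup_upper)
qed

theorem proposition3p2:
  fixes T :: "'a::banach \<Rightarrow> 'a"
  assumes "T \<in> Lip0"
    and "\<forall>x. gateaux_differentiable T x"
  shows "omega T = Sup {omega (gateaux_derivative T x) | x. True}"
proof (cases "omega_quotients T = {}")
  case True
  then have "omega_quotients (gateaux_derivative T x) = {}" for x
    using omega_quotients_empty_iff[of T] omega_quotients_empty_iff[of "gateaux_derivative T x"]
    by simp
  then show ?thesis using True by (simp add: omega_eq_Sup_quotients)
next
  case nonempty: False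
  have derivative_le: "omega (gateaux_derivative T x) \<le> omega T" for x
    using omega_gateaux_derivative_le[OF has_gateaux_derivative_someI[OF assms(2)] assms(1) nonempty] .
  then have bdd: "bdd_above {omega (gateaux_derivative T x) | x. True}"
    unfolding bdd_above_def by blast
  have "z \<le> Sup {omega (gateaux_derivative T x) | x. True}" if z: "z \<in> omega_quotients T" for z
  proof -
    obtain p where "z \<le> omega (gateaux_derivative T p)"
      using quotient_le_derivative_omega[OF assms z] by blast
    also have "\<dots> \<le> Sup {omega (gateaux_derivative T x) | x. True}"
      using bdd by (rule cSup_upper[rotated]) blast
    finally show ?thesis .
  qed
  then have "omega T \<le> Sup {omega (gateaux_derivative T x) | x. True}"
    unfolding omega_eq_Sup_quotients[of T] using nonempty by (intro cSup_least)
  moreover have "Sup {omega (gateaux_derivative T x) | x. True} \<le> omega T"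
    using derivative_le by (intro cSup_least) auto
  ultimately show ?thesis by (rule antisym)
qed

end
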